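(* Let $l,m,N$ be positive integers with $m>l\ge 5$, let $\boldsymbol\sigma\in\mathrm{ir}(l)$, and let $B_1,\dots,B_N\in\Sigma_q^m$. If $\boldsymbol\sigma B_i\boldsymbol\sigma\in\mathrm{ir}(m+2l)$ for all $i\in[N]$, then $B_1\boldsymbol\sigma B_2\boldsymbol\sigma\cdots\boldsymbol\sigma B_N\in\mathrm{ir}(N(m+l)-l)$.
   Context: $\Sigma_q=\{0,\dots,q-1\}$, $q\ge3$; $[N]=\{1,\dots,N\}$. A string is irreducible if it has no substring of the form $\mathbf{a}\mathbf{a}$ with $1\le|\mathbf{a}|\le3$; $\mathrm{ir}(n)$ is the set of irreducible strings of length $n$ over $\Sigma_q$. *)

theory Defs
  imports Main
begin

text \<open>Strings over the alphabet Sigma_q = {0,...,q-1} are lists of naturals with entries below q.\<close>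

definition Sigma :: "nat \<Rightarrow> nat set" where
  "Sigma q = {0..<q}"

definition irreducible :: "nat list \<Rightarrow> bool" where
  "irreducible s \<longleftrightarrow>
     \<not> (\<exists>i k. 1 \<le> k \<and> k \<le> 3 \<and> i + 2 * k \<le> length s \<and>
             take k (drop i s) = take k (drop (i + k) s))"

definition ir :: "nat \<Rightarrow> nat \<Rightarrow> nat list set" where
  "ir q n = {s. length s = n \<and> set s \<subseteq> Sigma q \<and> irreducible s}"

definition join_with :: "nat list \<Rightarrow> (nat \<Rightarrow> nat list) \<Rightarrow> nat \<Rightarrow> nat list" where
  "join_with \<sigma> B N = B 1 @ concat (map (\<lambda>i. \<sigma> @ B i) [2..<N+1])"

end

theory Submission
  imports Defs
begin

text \<open>A square has length at most 6, so one that straddles both joints of x u y with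
  |u| \<ge> 5 cannot exist: it lies inside x u or inside u y. Gluing the blocks
  \<sigma> B_i \<sigma> along their common copies of \<sigma> therefore never creates a square.\<close>

lemma take_drop_append_infix:
  "j + k \<le> length u \<Longrightarrow> take k (drop (length a + j) (a @ u @ b)) = take k (drop j u)"
  by (simp add: drop_append take_append)

lemma irreducible_infix:
  assumes "irreducible (a @ u @ b)"
  shows "irreducible u"
  unfolding irreducible_def
proof clarify
  fix j k
  assume k: "1 \<le> k" "k \<le> 3" and j: "j + 2 * k \<le> length u"
    and square: "take k (drop j u) = take k (drop (j + k) u)"
  have "take k (drop (length a + j) (a @ u @ b)) = take k (drop (length a + (j + k)) (a @ u @ b))"
    using j square by (simp add: take_drop_append_infix)
  moreover have "length a + j + 2 * k \<le> length (a @ u @ b)"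
    using j by simp
  ultimately show False
    using assms k unfolding irreducible_def by (metis add.assoc)
qed

lemma irreducible_prefix: "irreducible (u @ b) \<Longrightarrow> irreducible u"
  using irreducible_infix[of "[]" u b] by simp

lemma irreducible_suffix: "irreducible (a @ u) \<Longrightarrow> irreducible u"
  using irreducible_infix[of a u "[]"] by simp

lemma irreducible_append_overlap:
  assumes xu: "irreducible (x @ u)" and uy: "irreducible (u @ y)" and u: "length u \<ge> 5"
  shows "irreducible (x @ u @ y)"
  unfolding irreducible_def
proof clarify
  fix i k
  assume k: "1 \<le> k" "k \<le> 3" and i: "i + 2 * k \<le> length (x @ u @ y)"
    and square: "take k (drop i (x @ u @ y)) = take k (drop (i + k) (x @ u @ y))"
  show False
  proof (cases "i + 2 * k \<le> length (x @ u)")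
    case True
    then have "take k (drop i (x @ u)) = take k (drop (i + k) (x @ u))"
      using square take_drop_append_infix[of i k "x @ u" "[]" y]
        take_drop_append_infix[of "i + k" k "x @ u" "[]" y] by simp
    with True k xu show False unfolding irreducible_def by blast
  next
    case False
    define j where "j = i - length x"
    have i_eq: "i = length x + j"
      using False k u unfolding j_def by simp
    have "j + 2 * k \<le> length (u @ y)"
      using i i_eq by simp
    moreover have "take k (drop j (u @ y)) = take k (drop (j + k) (u @ y))"
      using square i_eq \<open>j + 2 * k \<le> length (u @ y)\<close>
        take_drop_append_infix[of j k "u @ y" x "[]"]
        take_drop_append_infix[of "j + k" k "u @ y" x "[]"]
      by (simp add: add.assoc)
    ultimately show False
      using k uy unfolding irreducible_def by blast
  qed
qed

lemma join_with_1: "join_with \<sigma> B 1 = B 1"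
  unfolding join_with_def by simp

lemma join_with_Suc:
  "n \<ge> 1 \<Longrightarrow> join_with \<sigma> B (Suc n) = join_with \<sigma> B n @ \<sigma> @ B (Suc n)"
  unfolding join_with_def by simp

lemma length_join_with:
  assumes "n \<ge> 1" and "\<forall>i\<in>{1..n}. length (B i) = m"
  shows "length (join_with \<sigma> B n) + length \<sigma> = n * (m + length \<sigma>)"
  using assms
proof (induction n rule: nat_induct_at_least)
  case base
  then show ?case unfolding join_with_1 by simp
next
  case (Suc n)
  then show ?case by (simp add: join_with_Suc)
qed

lemma set_join_with_subset:
  assumes "n \<ge> 1" and "set \<sigma> \<subseteq> A" and "\<forall>i\<in>{1..n}. set (B i) \<subseteq> A"
  shows "set (join_with \<sigma> B n) \<subseteq> A"
  using assms
proof (induction n rule: nat_induct_at_least)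
  case base
  then show ?case unfolding join_with_1 by simp
next
  case (Suc n)
  then show ?case by (simp add: join_with_Suc)
qed

lemma irreducible_join_with_append:
  assumes "n \<ge> 1" and "length \<sigma> \<ge> 5" and "\<forall>i\<in>{1..n}. irreducible (\<sigma> @ B i @ \<sigma>)"
  shows "irreducible (join_with \<sigma> B n @ \<sigma>)"
  using assms
proof (induction n rule: nat_induct_at_least)
  case base
  then show ?case
    unfolding join_with_1 using irreducible_suffix[of \<sigma> "B 1 @ \<sigma>"] by simp
next
  case (Suc n)
  then have "irreducible (join_with \<sigma> B n @ \<sigma>)" and "irreducible (\<sigma> @ B (Suc n) @ \<sigma>)"
    by auto
  then show ?case
    using irreducible_append_overlap[of "join_with \<sigma> B n" \<sigma> "B (Suc n) @ \<sigma>"] Suc.prems(1)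
    by (simp add: join_with_Suc[OF Suc.hyps])
qed

theorem lemma3:
  fixes q l m N :: nat and \<sigma> :: "nat list" and B :: "nat \<Rightarrow> nat list"
  assumes "q \<ge> 3"
    and "N \<ge> 1" and "l \<ge> 5" and "m > l"
    and "\<sigma> \<in> ir q l"
    and "\<forall>i\<in>{1..N}. length (B i) = m \<and> set (B i) \<subseteq> Sigma q"
    and "\<forall>i\<in>{1..N}. \<sigma> @ B i @ \<sigma> \<in> ir q (m + 2 * l)"
  shows "join_with \<sigma> B N \<in> ir q (N * (m + l) - l)"
proof -
  have \<sigma>: "length \<sigma> = l" "set \<sigma> \<subseteq> Sigma q"
    using assms(5) by (auto simp: ir_def)
  have "length (join_with \<sigma> B N) + l = N * (m + l)"
    using length_join_with[of N B m \<sigma>] assms(2,6) \<sigma>(1) by simp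
  moreover have "set (join_with \<sigma> B N) \<subseteq> Sigma q"
    using set_join_with_subset[of N \<sigma> "Sigma q" B] assms(2,6) \<sigma>(2) by simp
  moreover have "irreducible (join_with \<sigma> B N)"
    using irreducible_join_with_append[of N \<sigma> B] assms(2,3,7) \<sigma>(1)
      irreducible_prefix by (auto simp: ir_def)
  ultimately show ?thesis
    unfolding ir_def by auto
qed

end
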